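(* Let $\Gamma$ be a regular social purpose game. Then for every Nash equilibrium $x^{NE}$ and every social optimum $x^{SO}$ of $\Gamma$, $$\sum_{i=1}^n x^{NE}_i\le\sum_{i=1}^n x^{SO}_i.$$
   Context: A social purpose game $\Gamma=\langle N,\overline{Q},H,(\alpha_i,h_i,g_i)_{i\in N}\rangle$ consists of a player set $N=\{1,\dots,n\}$ with $n\ge 2$, a number $\overline{Q}>0$ such that every player's strategy set is $S_i=[0,\overline{Q}]$, a function $H\colon\mathbb{R}\to\mathbb{R}$, and for each $i\in N$ a weight $\alpha_i>0$ and functions $h_i,g_i\colon[0,\overline{Q}]\to\mathbb{R}$. The payoff of player $i$ at $x\in[0,\overline{Q}]^N$ is $\pi_i(x)=\alpha_i H\big(\sum_{j=1}^n h_j(x_j)\big)-g_i(x_i)$. A Nash equilibrium is a profile $x^*$ with $\pi_i(x^* )\ge\pi_i(y_i,x^*_{-i})$ for all $i$ and all $y_i$; a social optimum is a maximizer of $\sum_{i\in N}\pi_i$ over $[0,\overline{Q}]^N$. $\Gamma$ is regular if: each $h_i$ is the identity $h_i(x_i)=x_i$; $H$ is continuously differentiable, increasing and concave; and each $g_i$ is continuously differentiable, increasing and convex. *)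

theory Defs
  imports "HOL-Analysis.Analysis"
begin

text \<open>Social purpose game with players N = {1..n}. A strategy profile is a function
  x :: nat => real; only the components in {1..n} matter.\<close>

definition profile :: "nat \<Rightarrow> real \<Rightarrow> (nat \<Rightarrow> real) \<Rightarrow> bool" where
  "profile n Q x \<longleftrightarrow> (\<forall>i\<in>{1..n}. x i \<in> {0..Q})"

definition payoff ::
  "nat \<Rightarrow> (real \<Rightarrow> real) \<Rightarrow> (nat \<Rightarrow> real) \<Rightarrow> (nat \<Rightarrow> real \<Rightarrow> real) \<Rightarrow> (nat \<Rightarrow> real \<Rightarrow> real)
    \<Rightarrow> nat \<Rightarrow> (nat \<Rightarrow> real) \<Rightarrow> real" where
  "payoff n H \<alpha> h g i x = \<alpha> i * H (\<Sum>j\<in>{1..n}. h j (x j)) - g i (x i)"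

definition nash_equilibrium ::
  "nat \<Rightarrow> real \<Rightarrow> (real \<Rightarrow> real) \<Rightarrow> (nat \<Rightarrow> real) \<Rightarrow> (nat \<Rightarrow> real \<Rightarrow> real) \<Rightarrow> (nat \<Rightarrow> real \<Rightarrow> real)
    \<Rightarrow> (nat \<Rightarrow> real) \<Rightarrow> bool" where
  "nash_equilibrium n Q H \<alpha> h g x \<longleftrightarrow> profile n Q x \<and>
     (\<forall>i\<in>{1..n}. \<forall>y\<in>{0..Q}. payoff n H \<alpha> h g i x \<ge> payoff n H \<alpha> h g i (x(i := y)))"

definition social_optimum ::
  "nat \<Rightarrow> real \<Rightarrow> (real \<Rightarrow> real) \<Rightarrow> (nat \<Rightarrow> real) \<Rightarrow> (nat \<Rightarrow> real \<Rightarrow> real) \<Rightarrow> (nat \<Rightarrow> real \<Rightarrow> real)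
    \<Rightarrow> (nat \<Rightarrow> real) \<Rightarrow> bool" where
  "social_optimum n Q H \<alpha> h g x \<longleftrightarrow> profile n Q x \<and>
     (\<forall>y. profile n Q y \<longrightarrow>
        (\<Sum>i\<in>{1..n}. payoff n H \<alpha> h g i y) \<le> (\<Sum>i\<in>{1..n}. payoff n H \<alpha> h g i x))"

definition regular ::
  "nat \<Rightarrow> real \<Rightarrow> (real \<Rightarrow> real) \<Rightarrow> (nat \<Rightarrow> real \<Rightarrow> real) \<Rightarrow> (nat \<Rightarrow> real \<Rightarrow> real) \<Rightarrow> bool" where
  "regular n Q H h g \<longleftrightarrow>
     (\<forall>i\<in>{1..n}. \<forall>t\<in>{0..Q}. h i t = t) \<and>
     (\<exists>H'. (\<forall>s. (H has_real_derivative H' s) (at s)) \<and> continuous_on UNIV H') \<and>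
     strict_mono H \<and> concave_on UNIV H \<and>
     (\<forall>i\<in>{1..n}.
        (\<exists>g'. (\<forall>t\<in>{0..Q}. (g i has_real_derivative g' t) (at t within {0..Q})) \<and>
              continuous_on {0..Q} g') \<and>
        strict_mono_on {0..Q} (g i) \<and> convex_on {0..Q} (g i))"

end

theory Submission
  imports Defs
begin

text \<open>Suppose the equilibrium total strictly exceeds the optimal one. Then some player \<open>i\<close> plays
  more at the equilibrium than at the optimum, and we can shift a small amount \<open>\<delta>\<close> of her effort:
  lowering her equilibrium effort by \<open>\<delta>\<close> does not pay for her, while raising her optimal effort by
  \<open>\<delta>\<close> does not pay for society. Concavity of \<open>H\<close> and convexity of \<open>g\<^sub>i\<close> compare the two marginal
  trade-offs and yield \<open>\<Sum>\<^sub>k \<alpha>\<^sub>k \<le> \<alpha>\<^sub>i\<close>, which is impossible for two or more players.\<close>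

lemma convex_on_increment_le:
  fixes f :: "real \<Rightarrow> real"
  assumes f: "convex_on I f" and I: "u \<in> I" "v + d \<in> I" and "u \<le> v" "0 \<le> d"
  shows "f (u + d) - f u \<le> f (v + d) - f v"
proof (cases "d = 0")
  case False
  define s where "s = d / (v + d - u)"
  have s: "0 \<le> s" "s \<le> 1" "s * (v + d - u) = d"
    using assms False by (auto simp: s_def field_simps)
  have "(1 - s) *\<^sub>R u + s *\<^sub>R (v + d) = u + s * (v + d - u)"
    and "(1 - (1 - s)) *\<^sub>R u + (1 - s) *\<^sub>R (v + d) = v + d - s * (v + d - u)"
    by (simp_all add: algebra_simps)
  then have "f (u + d) \<le> (1 - s) * f u + s * f (v + d)"
    and "f v \<le> (1 - (1 - s)) * f u + (1 - s) * f (v + d)"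
    using convex_onD[OF f, of s u "v + d"] convex_onD[OF f, of "1 - s" u "v + d"] s I by simp_all
  then show ?thesis by (simp add: algebra_simps)
qed simp

lemma concave_on_increment_ge:
  fixes f :: "real \<Rightarrow> real"
  assumes "concave_on I f" and "u \<in> I" "v + d \<in> I" and "u \<le> v" "0 \<le> d"
  shows "f (v + d) - f v \<le> f (u + d) - f u"
  using convex_on_increment_le[of I "\<lambda>x. - f x" u v d] assms by (simp add: concave_on_def)

lemma sum_fun_upd:
  fixes f :: "'a \<Rightarrow> 'b \<Rightarrow> 'c::ab_group_add"
  assumes "finite A" "i \<in> A"
  shows "(\<Sum>j\<in>A. f j ((x(i := y)) j)) = (\<Sum>j\<in>A. f j (x j)) - f i (x i) + f i y"
proof -
  have "(\<Sum>j\<in>A - {i}. f j ((x(i := y)) j)) = (\<Sum>j\<in>A - {i}. f j (x j))"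
    by (rule sum.cong) auto
  then show ?thesis
    using sum.remove[OF assms, of "\<lambda>j. f j ((x(i := y)) j)"] sum.remove[OF assms, of "\<lambda>j. f j (x j)"]
    by simp
qed

lemma profile_fun_upd:
  assumes "profile n Q x" "y \<in> {0..Q}"
  shows "profile n Q (x(i := y))"
  using assms unfolding profile_def by auto

lemma regular_sum_h:
  assumes "regular n Q H h g" "profile n Q x"
  shows "(\<Sum>j\<in>{1..n}. h j (x j)) = (\<Sum>j\<in>{1..n}. x j)"
  using assms unfolding regular_def profile_def by (intro sum.cong) auto

lemma regular_sum_h_fun_upd:
  assumes "regular n Q H h g" "profile n Q x" "i \<in> {1..n}" "y \<in> {0..Q}"
  shows "(\<Sum>j\<in>{1..n}. h j ((x(i := y)) j)) = (\<Sum>j\<in>{1..n}. x j) - x i + y"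
  using regular_sum_h[OF assms(1) profile_fun_upd[OF assms(2,4)]]
    sum_fun_upd[of "{1..n}" i "\<lambda>j t. t"] assms(3)
  by simp

lemma sum_payoff:
  "(\<Sum>k\<in>{1..n}. payoff n H \<alpha> h g k x) =
     (\<Sum>k\<in>{1..n}. \<alpha> k) * H (\<Sum>j\<in>{1..n}. h j (x j)) - (\<Sum>k\<in>{1..n}. g k (x k))"
  unfolding payoff_def by (simp add: sum_subtractf sum_distrib_right)

lemma nash_equilibrium_deviation:
  assumes "regular n Q H h g" "nash_equilibrium n Q H \<alpha> h g x" "i \<in> {1..n}" "y \<in> {0..Q}"
  defines "S \<equiv> \<Sum>j\<in>{1..n}. x j"
  shows "\<alpha> i * H (S - x i + y) - g i y \<le> \<alpha> i * H S - g i (x i)"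
proof -
  have x: "profile n Q x"
    using assms(2) by (simp add: nash_equilibrium_def)
  have "payoff n H \<alpha> h g i (x(i := y)) \<le> payoff n H \<alpha> h g i x"
    using assms(2-4) by (simp add: nash_equilibrium_def)
  then show ?thesis
    using regular_sum_h[OF assms(1) x] regular_sum_h_fun_upd[OF assms(1) x assms(3,4)]
    by (simp add: payoff_def S_def)
qed

lemma social_optimum_deviation:
  assumes "regular n Q H h g" "social_optimum n Q H \<alpha> h g x" "i \<in> {1..n}" "y \<in> {0..Q}"
  defines "S \<equiv> \<Sum>j\<in>{1..n}. x j" and "A \<equiv> \<Sum>k\<in>{1..n}. \<alpha> k"
  shows "A * H (S - x i + y) - g i y \<le> A * H S - g i (x i)"
proof -
  have x: "profile n Q x"
    using assms(2) by (simp add: social_optimum_def)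
  have "(\<Sum>k\<in>{1..n}. payoff n H \<alpha> h g k (x(i := y))) \<le> (\<Sum>k\<in>{1..n}. payoff n H \<alpha> h g k x)"
    using assms(2) profile_fun_upd[OF x assms(4)] by (simp add: social_optimum_def)
  then have "A * H (\<Sum>j\<in>{1..n}. h j ((x(i := y)) j)) - (\<Sum>k\<in>{1..n}. g k ((x(i := y)) k))
      \<le> A * H (\<Sum>j\<in>{1..n}. h j (x j)) - (\<Sum>k\<in>{1..n}. g k (x k))"
    by (simp only: sum_payoff A_def)
  then show ?thesis
    unfolding regular_sum_h[OF assms(1) x] regular_sum_h_fun_upd[OF assms(1) x assms(3,4)] S_def
    using sum_fun_upd[of "{1..n}" i g x y] assms(3) by simp
qed

lemma member_lt_sum_pos:
  fixes \<alpha> :: "'a \<Rightarrow> real"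
  assumes "finite A" "i \<in> A" "j \<in> A" "j \<noteq> i" "\<forall>k\<in>A. \<alpha> k > 0"
  shows "\<alpha> i < (\<Sum>k\<in>A. \<alpha> k)"
proof -
  have "\<alpha> j \<le> (\<Sum>k\<in>A - {i}. \<alpha> k)"
    using assms by (intro member_le_sum) auto
  then show ?thesis
    using sum.remove[OF assms(1,2), of \<alpha>] assms(3,5) by fastforce
qed

theorem proposition5:
  fixes n :: nat and Q :: real and H :: "real \<Rightarrow> real" and \<alpha> :: "nat \<Rightarrow> real"
    and h g :: "nat \<Rightarrow> real \<Rightarrow> real" and xNE xSO :: "nat \<Rightarrow> real"
  assumes "n \<ge> 2" and "Q > 0" and "\<forall>i\<in>{1..n}. \<alpha> i > 0"
    and "regular n Q H h g"
    and "nash_equilibrium n Q H \<alpha> h g xNE"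
    and "social_optimum n Q H \<alpha> h g xSO"
  shows "(\<Sum>i\<in>{1..n}. xNE i) \<le> (\<Sum>i\<in>{1..n}. xSO i)"
proof (rule ccontr)
  define SN SS A where "SN = (\<Sum>j\<in>{1..n}. xNE j)" and "SS = (\<Sum>j\<in>{1..n}. xSO j)"
    and "A = (\<Sum>k\<in>{1..n}. \<alpha> k)"
  assume "\<not> ?thesis"
  then have "SS < SN" by (simp add: SN_def SS_def)
  then obtain i where i: "i \<in> {1..n}" and "xSO i < xNE i"
    unfolding SN_def SS_def using sum_mono[of "{1..n}" xNE xSO] by (meson not_le)
  define \<delta> where "\<delta> = min (xNE i - xSO i) (SN - SS)"
  have \<delta>: "0 < \<delta>" "xSO i \<le> xNE i - \<delta>" "SS \<le> SN - \<delta>"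
    using \<open>SS < SN\<close> \<open>xSO i < xNE i\<close> by (auto simp: \<delta>_def)
  have "xSO i \<in> {0..Q}" "xNE i \<in> {0..Q}"
    using assms(5,6) i by (simp_all add: nash_equilibrium_def social_optimum_def profile_def)
  then have range: "xSO i \<in> {0..Q}" "xNE i \<in> {0..Q}" "xNE i - \<delta> \<in> {0..Q}" "xSO i + \<delta> \<in> {0..Q}"
    using \<delta> by auto
  have reg: "strict_mono H" "concave_on UNIV H" "convex_on {0..Q} (g i)"
    using assms(4) i by (auto simp: regular_def)
  have "A * (H SN - H (SN - \<delta>)) \<le> A * (H (SS + \<delta>) - H SS)"
    using concave_on_increment_ge[OF reg(2), of SS "SN - \<delta>" \<delta>] \<delta> assms(3)
    by (intro mult_left_mono) (auto simp: A_def intro: sum_nonneg less_imp_le)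
  also have "\<dots> \<le> g i (xSO i + \<delta>) - g i (xSO i)"
    using social_optimum_deviation[OF assms(4,6) i range(4)] by (simp add: SS_def A_def algebra_simps)
  also have "\<dots> \<le> g i (xNE i) - g i (xNE i - \<delta>)"
    using convex_on_increment_le[OF reg(3), of "xSO i" "xNE i - \<delta>" \<delta>] range \<delta> by simp
  also have "\<dots> \<le> \<alpha> i * (H SN - H (SN - \<delta>))"
    using nash_equilibrium_deviation[OF assms(4,5) i range(3)] by (simp add: SN_def algebra_simps)
  finally have "A * (H SN - H (SN - \<delta>)) \<le> \<alpha> i * (H SN - H (SN - \<delta>))" .
  moreover have "0 < H SN - H (SN - \<delta>)"
    using reg(1) \<delta>(1) by (simp add: strict_mono_def)
  ultimately have "A \<le> \<alpha> i" by simp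
  moreover have "\<alpha> i < A"
    using member_lt_sum_pos[of "{1..n}" i "if i = 1 then 2 else 1" \<alpha>] i assms(1,3)
    by (simp add: A_def)
  ultimately show False by simp
qed

end
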